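(* Let $q\in(0,1)$, let $a_n,b_n,c_n$ be the recurrence coefficients of the little $q$-Legendre polynomials and $P_1(x)=(x-b_0)/a_0=(q+1)x-q$. Let $K:=\left\lceil\frac{\log4}{\log\frac{1}{q}}-1\right\rceil$ and, for all $n,k\in\mathbb{N}_0$, \[A_n(k):=\frac{[b_{k+1}-P_1(1-q^n)][b_{k+2}-P_1(1-q^n)]}{a_{k+1}c_{k+2}},\qquad B_n(k):=\frac{[b_{n+k+1}-P_1(1-q^n)]q^k}{c_{n+k+1}}.\] Then $A_n(n+k)>4$ and $B_n(k)>\frac{1}{2q}$ for all $n\in\mathbb{N}_0$ and all $k\in\mathbb{N}_0$ with $k\ge K$. Moreover, $\lim_{k\to\infty}B_n(k)=\frac1q$ for every $n\in\mathbb{N}_0$.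
   Context: For $q\in(0,1)$ the recurrence coefficients are $a_0=\frac{1}{q+1}$, $b_0=\frac{q}{q+1}$, and for $n\ge1$: $a_n=q^n\frac{(1+q)(1-q^{n+1})}{(1-q^{2n+1})(1+q^{n+1})}$, $c_n=q^n\frac{(1+q)(1-q^n)}{(1-q^{2n+1})(1+q^n)}$, $b_n=\frac{(1-q^n)(1-q^{n+1})}{(1+q^n)(1+q^{n+1})}$. *)

theory Defs
  imports Complex_Main
begin

text \<open>Recurrence coefficients of the little q-Legendre polynomials (q in (0,1)).
  c_0 is not used; we set it to 0 by convention.\<close>

definition lqa :: "real \<Rightarrow> nat \<Rightarrow> real" where
  "lqa q n = (if n = 0 then 1 / (q + 1)
     else q ^ n * ((1 + q) * (1 - q ^ (n + 1))) / ((1 - q ^ (2 * n + 1)) * (1 + q ^ (n + 1))))"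

definition lqb :: "real \<Rightarrow> nat \<Rightarrow> real" where
  "lqb q n = (if n = 0 then q / (q + 1)
     else ((1 - q ^ n) * (1 - q ^ (n + 1))) / ((1 + q ^ n) * (1 + q ^ (n + 1))))"

definition lqc :: "real \<Rightarrow> nat \<Rightarrow> real" where
  "lqc q n = (if n = 0 then 0
     else q ^ n * ((1 + q) * (1 - q ^ n)) / ((1 - q ^ (2 * n + 1)) * (1 + q ^ n)))"

definition P1 :: "real \<Rightarrow> real \<Rightarrow> real" where
  "P1 q x = (x - lqb q 0) / lqa q 0"

definition Kq :: "real \<Rightarrow> int" where
  "Kq q = \<lceil>ln 4 / ln (1 / q) - 1\<rceil>"

definition An :: "real \<Rightarrow> nat \<Rightarrow> nat \<Rightarrow> real" where
  "An q n k = ((lqb q (k + 1) - P1 q (1 - q ^ n)) * (lqb q (k + 2) - P1 q (1 - q ^ n)))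
              / (lqa q (k + 1) * lqc q (k + 2))"

definition Bn :: "real \<Rightarrow> nat \<Rightarrow> nat \<Rightarrow> real" where
  "Bn q n k = ((lqb q (n + k + 1) - P1 q (1 - q ^ n)) * q ^ k) / lqc q (n + k + 1)"

end

theory Submission
  imports Defs
begin

(* Put y = q^m with m = n + j. Then
     b_m - P_1(1 - q^n) = (1 + q) y (1 - 2 q^j / ((1 + y)(1 + q y))) / q^j,
   while a_m and c_m are (1 + q) y divided by explicit factors (the gains) exceeding 1.
   Hence B_n(k) is a damping factor times a gain divided by q, and A_n(n + k) is a product of
   two damping factors and two gains divided by q^(2k+3). The damping factors exceed 1/2 as soon
   as q^(k+1) <= 1/4, which is what k >= K guarantees; as k tends to infinity all factors tend to 1. *)

definition lq_damping :: "real \<Rightarrow> real \<Rightarrow> real \<Rightarrow> real" where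
  "lq_damping q s y = 1 - 2 * s / ((1 + y) * (1 + q * y))"

definition lqa_gain :: "real \<Rightarrow> real \<Rightarrow> real" where
  "lqa_gain q y = (1 - q * y\<^sup>2) * (1 + q * y) / (1 - q * y)"

definition lqc_gain :: "real \<Rightarrow> real \<Rightarrow> real" where
  "lqc_gain q y = (1 - q * y\<^sup>2) * (1 + y) / (1 - y)"

lemma unit_interval_mult_lt_one:
  fixes q y :: real
  assumes "0 < q" "q < 1" "0 < y" "y < 1"
  shows "q * y < 1" "y\<^sup>2 < 1" "q * y\<^sup>2 < 1"
proof -
  show "q * y < 1" "y\<^sup>2 < 1"
    using assms mult_strict_mono[of q 1 y 1] power_strict_mono[of y 1 2] by simp_all
  then show "q * y\<^sup>2 < 1"
    using assms mult_strict_mono[of q 1 "y\<^sup>2" 1] by simp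
qed

lemma lq_denominator_gt_one:
  fixes q y :: real
  assumes "0 \<le> q" "0 < y"
  shows "1 < (1 + y) * (1 + q * y)"
proof -
  have "1 * 1 < (1 + y) * (1 + q * y)"
    using assms by (intro mult_less_le_imp_less) auto
  then show ?thesis by simp
qed

lemma lqa_eq_gain:
  assumes "0 < q" "q < 1" "m \<noteq> 0"
  shows "lqa q m = (1 + q) * q ^ m / lqa_gain q (q ^ m)"
proof -
  have "0 < q ^ m" "q ^ m < 1"
    using assms by (simp_all add: power_less_one_iff)
  with assms have "q * q ^ m < 1" "q * (q ^ m)\<^sup>2 < 1"
    using unit_interval_mult_lt_one by blast+
  moreover have "q ^ (2 * m + 1) = q * (q ^ m)\<^sup>2"
    by (simp add: power_mult power2_eq_square power_mult_distrib mult_ac)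
  ultimately show ?thesis
    using assms by (simp add: lqa_def lqa_gain_def field_simps)
qed

lemma lqc_eq_gain:
  assumes "0 < q" "q < 1" "m \<noteq> 0"
  shows "lqc q m = (1 + q) * q ^ m / lqc_gain q (q ^ m)"
proof -
  have "0 < q ^ m" "q ^ m < 1"
    using assms by (simp_all add: power_less_one_iff)
  with assms have "q * (q ^ m)\<^sup>2 < 1"
    using unit_interval_mult_lt_one by blast
  moreover have "q ^ (2 * m + 1) = q * (q ^ m)\<^sup>2"
    by (simp add: power_mult power2_eq_square power_mult_distrib mult_ac)
  ultimately show ?thesis
    using assms \<open>q ^ m < 1\<close> by (simp add: lqc_def lqc_gain_def field_simps)
qed

lemma P1_one_minus_power:
  assumes "0 < q"
  shows "P1 q (1 - q ^ n) = 1 - (1 + q) * q ^ n"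
  using assms by (simp add: P1_def lqa_def lqb_def field_simps)

lemma lqb_minus_P1:
  assumes "0 < q" "m \<noteq> 0"
  shows "lqb q m - P1 q (1 - q ^ n) = (1 + q) * (q ^ n - 2 * q ^ m / ((1 + q ^ m) * (1 + q * q ^ m)))"
proof -
  define y where "y = q ^ m"
  have "0 < y" using assms by (simp add: y_def)
  then have "1 < (1 + y) * (1 + q * y)"
    using assms by (intro lq_denominator_gt_one) auto
  then have "(1 + y) * (1 + q * y) \<noteq> 0"
    by linarith
  moreover have "lqb q m = (1 - y) * (1 - q * y) / ((1 + y) * (1 + q * y))"
    using assms by (simp add: lqb_def y_def)
  ultimately show ?thesis
    using assms by (simp add: P1_one_minus_power y_def[symmetric] field_simps)
qed

lemma lqb_minus_P1_over_power:
  assumes "0 < q" "n + j \<noteq> 0"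
  shows "(lqb q (n + j) - P1 q (1 - q ^ n)) / ((1 + q) * q ^ (n + j))
    = lq_damping q (q ^ j) (q ^ (n + j)) / q ^ j"
proof -
  define s y where "s = q ^ j" and "y = q ^ (n + j)"
  have "0 < s" "0 < y" "q ^ n = y / s"
    using assms by (simp_all add: s_def y_def power_add)
  then have diff: "lqb q (n + j) - P1 q (1 - q ^ n) = (1 + q) * (y / s - 2 * y / ((1 + y) * (1 + q * y)))"
    using lqb_minus_P1[OF assms, of n] by (simp add: y_def)
  have "1 < (1 + y) * (1 + q * y)"
    using assms \<open>0 < y\<close> by (intro lq_denominator_gt_one) auto
  then have "(1 + y) * (1 + q * y) \<noteq> 0" "1 + q \<noteq> 0"
    using assms by linarith+
  with \<open>0 < s\<close> \<open>0 < y\<close> show ?thesis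
    unfolding diff s_def[symmetric] y_def[symmetric] lq_damping_def
    by (simp add: divide_simps) (simp add: algebra_simps)
qed

lemma lqb_minus_P1_div_lqa:
  assumes "0 < q" "q < 1" "n + j \<noteq> 0"
  shows "(lqb q (n + j) - P1 q (1 - q ^ n)) / lqa q (n + j)
    = lq_damping q (q ^ j) (q ^ (n + j)) * lqa_gain q (q ^ (n + j)) / q ^ j"
proof -
  have "(lqb q (n + j) - P1 q (1 - q ^ n)) / lqa q (n + j)
      = (lqb q (n + j) - P1 q (1 - q ^ n)) / ((1 + q) * q ^ (n + j)) * lqa_gain q (q ^ (n + j))"
    by (simp add: lqa_eq_gain[OF assms])
  then show ?thesis
    by (simp add: lqb_minus_P1_over_power[OF assms(1,3)])
qed

lemma lqb_minus_P1_div_lqc: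
  assumes "0 < q" "q < 1" "n + j \<noteq> 0"
  shows "(lqb q (n + j) - P1 q (1 - q ^ n)) / lqc q (n + j)
    = lq_damping q (q ^ j) (q ^ (n + j)) * lqc_gain q (q ^ (n + j)) / q ^ j"
proof -
  have "(lqb q (n + j) - P1 q (1 - q ^ n)) / lqc q (n + j)
      = (lqb q (n + j) - P1 q (1 - q ^ n)) / ((1 + q) * q ^ (n + j)) * lqc_gain q (q ^ (n + j))"
    by (simp add: lqc_eq_gain[OF assms])
  then show ?thesis
    by (simp add: lqb_minus_P1_over_power[OF assms(1,3)])
qed

lemma lq_damping_gt_half:
  assumes "0 \<le> q" "0 < y" "s \<le> 1 / 4"
  shows "1 / 2 < lq_damping q s y"
proof -
  have D: "1 < (1 + y) * (1 + q * y)"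
    using assms by (intro lq_denominator_gt_one)
  have "2 * s / ((1 + y) * (1 + q * y)) < 1 / 2"
  proof (cases "s \<le> 0")
    case True
    with D show ?thesis by (simp add: divide_nonpos_pos)
  next
    case False
    with D have "2 * s / ((1 + y) * (1 + q * y)) < 2 * s"
      by (simp add: divide_less_eq)
    with assms show ?thesis by linarith
  qed
  then show ?thesis by (simp add: lq_damping_def)
qed

lemma lq_damping_mult_gt_half:
  assumes "0 \<le> q" "0 < y" "s \<le> 1 / 4" "1 < g"
  shows "1 / 2 < lq_damping q s y * g"
proof -
  have "1 / 2 < lq_damping q s y"
    using assms by (intro lq_damping_gt_half)
  then have "1 / 2 * 1 < lq_damping q s y * g"
    using assms by (intro mult_strict_mono) auto
  then show ?thesis by simp
qed

lemma lqa_gain_gt_one: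
  fixes q y :: real
  assumes "0 < q" "q < 1" "0 < y" "y < 1"
  shows "1 < lqa_gain q y"
proof -
  have "q * y < 1" using assms unit_interval_mult_lt_one by blast
  then have "y * (1 + q * y) < 1 * 2"
    using assms by (intro mult_strict_mono) auto
  then have "(q * y) * (y * (1 + q * y)) < (q * y) * 2"
    using assms by (intro mult_strict_left_mono) auto
  with \<open>q * y < 1\<close> show ?thesis
    by (simp add: lqa_gain_def field_simps power2_eq_square)
qed

lemma lqc_gain_gt_one:
  fixes q y :: real
  assumes "0 < q" "q < 1" "0 < y" "y < 1"
  shows "1 < lqc_gain q y"
proof -
  have "q * y < 1" using assms unit_interval_mult_lt_one by blast
  then have "(q * y) * (1 + y) < 1 * 2"
    using assms by (intro mult_strict_mono) auto
  then have "y * ((q * y) * (1 + y)) < y * 2"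
    using assms by (intro mult_strict_left_mono) auto
  with assms show ?thesis
    by (simp add: lqc_gain_def field_simps power2_eq_square)
qed

lemma Kq_le_imp_power_Suc_le_quarter:
  fixes q :: real
  assumes "0 < q" "q < 1" "Kq q \<le> int k"
  shows "q ^ (k + 1) \<le> 1 / 4"
proof -
  have "0 < ln (1 / q)" using assms by simp
  have "ln 4 / ln (1 / q) \<le> real k + 1"
    using assms(3) le_of_int_ceiling[of "ln 4 / ln (1 / q) - 1"]
    unfolding Kq_def by linarith
  then have "ln 4 \<le> real (k + 1) * ln (1 / q)"
    using \<open>0 < ln (1 / q)\<close> by (simp add: divide_le_eq add.commute)
  also have "\<dots> = - ln (q ^ (k + 1))"
    using assms by (subst ln_realpow) (simp_all add: ln_div)
  finally have "ln (q ^ (k + 1)) \<le> ln (1 / 4)"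
    by (simp add: ln_div)
  then show ?thesis
    using assms by simp
qed

lemma Bn_eq_damping_gain:
  assumes "0 < q" "q < 1"
  shows "Bn q n k = lq_damping q (q ^ (k + 1)) (q ^ (n + k + 1)) * lqc_gain q (q ^ (n + k + 1)) / q"
proof -
  have "Bn q n k = (lqb q (n + (k + 1)) - P1 q (1 - q ^ n)) / lqc q (n + (k + 1)) * q ^ k"
    by (simp add: Bn_def)
  also have "\<dots> = lq_damping q (q ^ (k + 1)) (q ^ (n + k + 1)) * lqc_gain q (q ^ (n + k + 1))
      / q ^ (k + 1) * q ^ k"
    using lqb_minus_P1_div_lqc[OF assms, of n "k + 1"] by (simp add: add.assoc)
  finally show ?thesis
    using assms by simp
qed

lemma An_diagonal_eq_damping_gain:
  assumes "0 < q" "q < 1"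
  shows "An q n (n + k)
    = lq_damping q (q ^ (k + 1)) (q ^ (n + k + 1)) * lqa_gain q (q ^ (n + k + 1))
      * (lq_damping q (q ^ (k + 2)) (q ^ (n + k + 2)) * lqc_gain q (q ^ (n + k + 2)))
      / (q ^ (k + 1) * q ^ (k + 2))"
proof -
  have "An q n (n + k)
      = (lqb q (n + (k + 1)) - P1 q (1 - q ^ n)) / lqa q (n + (k + 1))
      * ((lqb q (n + (k + 2)) - P1 q (1 - q ^ n)) / lqc q (n + (k + 2)))"
    by (simp add: An_def add.assoc)
  also have "\<dots> = lq_damping q (q ^ (k + 1)) (q ^ (n + (k + 1))) * lqa_gain q (q ^ (n + (k + 1)))
      / q ^ (k + 1)
      * (lq_damping q (q ^ (k + 2)) (q ^ (n + (k + 2))) * lqc_gain q (q ^ (n + (k + 2)))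
      / q ^ (k + 2))"
    using lqb_minus_P1_div_lqa[OF assms, of n "k + 1"] lqb_minus_P1_div_lqc[OF assms, of n "k + 2"]
    by simp
  finally show ?thesis
    by (simp add: add.assoc)
qed

lemma Bn_gt_inverse_2q:
  assumes "0 < q" "q < 1" "q ^ (k + 1) \<le> 1 / 4"
  shows "1 / (2 * q) < Bn q n k"
proof -
  define s y where "s = q ^ (k + 1)" and "y = q ^ (n + k + 1)"
  have "0 < y" "y < 1"
    using assms power_Suc_less_one[of q "n + k"] by (simp_all add: y_def)
  then have "1 / 2 < lq_damping q s y * lqc_gain q y"
    using assms by (intro lq_damping_mult_gt_half lqc_gain_gt_one) (auto simp: s_def)
  then have "1 / 2 / q < lq_damping q s y * lqc_gain q y / q"
    using assms by (intro divide_strict_right_mono)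
  then show ?thesis
    using assms by (simp add: Bn_eq_damping_gain s_def y_def)
qed

lemma An_diagonal_gt_4:
  assumes "0 < q" "q < 1" "q ^ (k + 1) \<le> 1 / 4"
  shows "4 < An q n (n + k)"
proof -
  define s y where "s = q ^ (k + 1)" and "y = q ^ (n + k + 1)"
  have "0 < y" "y < 1"
    using assms power_Suc_less_one[of q "n + k"] by (simp_all add: y_def)
  with assms have y: "0 < y" "y < 1" "0 < q * y" "q * y < 1"
    using unit_interval_mult_lt_one by simp_all
  have "0 < s" "s \<le> 1 / 4"
    using assms by (simp_all add: s_def)
  with assms have s: "0 < s" "s \<le> 1 / 4" "q * s \<le> 1 / 4"
    using mult_left_le_one_le[of s q] by linarith+
  have "1 / 2 < lq_damping q s y * lqa_gain q y"
    using assms y s by (intro lq_damping_mult_gt_half lqa_gain_gt_one) auto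
  moreover have "1 / 2 < lq_damping q (q * s) (q * y) * lqc_gain q (q * y)"
    using assms y s by (intro lq_damping_mult_gt_half lqc_gain_gt_one) auto
  ultimately have "1 / 2 * (1 / 2) < lq_damping q s y * lqa_gain q y
      * (lq_damping q (q * s) (q * y) * lqc_gain q (q * y))"
    by (intro mult_strict_mono) auto
  moreover have "s * (q * s) < 1 / 16"
  proof -
    have "s * (q * s) = q * s\<^sup>2"
      by (simp add: power2_eq_square)
    also have "\<dots> < 1 * (1 / 4)\<^sup>2"
      using assms s by (intro mult_less_le_imp_less power_mono) auto
    finally show ?thesis by (simp add: power2_eq_square)
  qed
  moreover have "An q n (n + k) = lq_damping q s y * lqa_gain q y
      * (lq_damping q (q * s) (q * y) * lqc_gain q (q * y)) / (s * (q * s))"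
    using An_diagonal_eq_damping_gain[OF assms(1,2)] by (simp add: s_def y_def)
  ultimately show ?thesis
    using assms s by (simp add: pos_less_divide_eq)
qed

lemma Bn_tendsto_inverse:
  assumes "0 < q" "q < 1"
  shows "(\<lambda>k. Bn q n k) \<longlonglongrightarrow> 1 / q"
proof -
  have "(\<lambda>k. q ^ k) \<longlonglongrightarrow> 0"
    using assms by (intro LIMSEQ_power_zero) auto
  then have s: "(\<lambda>k. q ^ (k + 1)) \<longlonglongrightarrow> 0" and y: "(\<lambda>k. q ^ (n + k + 1)) \<longlonglongrightarrow> 0"
    using tendsto_mult_right_zero[of "\<lambda>k. q ^ k" sequentially "q ^ (n + 1)"]
    by (simp_all add: power_add mult_ac tendsto_mult_right_zero)
  have "(\<lambda>k. lq_damping q (q ^ (k + 1)) (q ^ (n + k + 1)) * lqc_gain q (q ^ (n + k + 1)) / q)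
      \<longlonglongrightarrow> lq_damping q 0 0 * lqc_gain q 0 / q"
    unfolding lq_damping_def lqc_gain_def using assms by (intro tendsto_intros s y) auto
  then show ?thesis
    using assms by (simp add: Bn_eq_damping_gain lq_damping_def lqc_gain_def)
qed

theorem lemma2p4:
  fixes q :: real
  assumes "0 < q" and "q < 1"
  shows "(\<forall>n k. int k \<ge> Kq q \<longrightarrow> An q n (n + k) > 4 \<and> Bn q n k > 1 / (2 * q))
         \<and> (\<forall>n. (\<lambda>k. Bn q n k) \<longlonglongrightarrow> 1 / q)"
proof (intro conjI allI impI)
  fix n k :: nat
  assume "int k \<ge> Kq q"
  then have "q ^ (k + 1) \<le> 1 / 4"
    by (rule Kq_le_imp_power_Suc_le_quarter[OF assms])
  then show "An q n (n + k) > 4" and "Bn q n k > 1 / (2 * q)"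
    by (rule An_diagonal_gt_4[OF assms], rule Bn_gt_inverse_2q[OF assms])
next
  fix n :: nat
  show "(\<lambda>k. Bn q n k) \<longlonglongrightarrow> 1 / q"
    using assms by (rule Bn_tendsto_inverse)
qed

end
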